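(* Let $0<\beta<\frac12$ and for $z\in\mathbb{C}$ with $|\Re(z)|\neq\beta$ set $$I(\beta,1;z)=\frac{1}{2\pi i}\int_{\beta-i\infty}^{\beta+i\infty}\left(\frac{\cos\pi z}{\cos\pi w}\right)\left(\frac{2w}{z^2-w^2}\right)\mathrm{d}w.$$ Then $I(\beta,1;z)=0$ for all $z$ with $\Re(z)>\beta$. *)

theory Defs
  imports "HOL-Analysis.Analysis"
begin

text \<open>Integrand of I(beta,1;z) along the vertical line Re w = beta,
  parametrised by w = beta + i t (t real), so that dw = i dt.\<close>
definition I_integrand :: "real \<Rightarrow> complex \<Rightarrow> real \<Rightarrow> complex" where
  "I_integrand \<beta> z t =
     (let w = complex_of_real \<beta> + \<i> * complex_of_real t
      in (cos (complex_of_real pi * z) / cos (complex_of_real pi * w)) * (2 * w / (z\<^sup>2 - w\<^sup>2)) * \<i>)"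

definition I_beta1 :: "real \<Rightarrow> complex \<Rightarrow> complex" where
  "I_beta1 \<beta> z = (1 / (2 * complex_of_real pi * \<i>)) * integral UNIV (I_integrand \<beta> z)"

end

theory Submission
  imports Defs "HOL-Complex_Analysis.Complex_Analysis"
begin

text \<open>The integrand f(w) = cos(\<pi> z) / cos(\<pi> w) * 2w / (z^2 - w^2) is odd in w, holomorphic on the
  strip |Re w| < min (1/2) (Re z), and decays like exp(-\<pi> |Im w|) there. By Cauchy's theorem the
  integrals of f along Re w = \<beta> and Re w = -\<beta> agree, while oddness (w \<mapsto> -w also reverses the
  orientation of the line) makes them negatives of each other, so both vanish. Concretely, on the
  rectangle with corners \<plusminus>\<beta> \<plusminus> iT oddness identifies opposite sides, so the right side equals
  minus the top side, which is O(exp(-\<pi> T)).\<close>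

lemma norm_cos_ge_cos_mult_cosh:
  fixes w :: complex
  assumes "\<bar>Re w\<bar> \<le> c" "c \<le> pi/2"
  shows "cos c * cosh (Im w) \<le> norm (cos w)"
proof -
  have cos_c: "0 \<le> cos c" "cos c \<le> 1"
    using assms by (auto intro: cos_ge_zero)
  have "cos c \<le> cos \<bar>Re w\<bar>"
    using assms by (intro cos_monotone_0_pi_le) auto
  then have "cos c ^ 2 \<le> cos (Re w) ^ 2"
    using cos_c by (intro power_mono) auto
  moreover have "cos c ^ 2 * sinh (Im w) ^ 2 \<le> sinh (Im w) ^ 2"
    using cos_c by (intro mult_left_le_one_le) (auto simp: power_le_one)
  moreover have "norm (cos w) ^ 2 = cos (Re w) ^ 2 + sinh (Im w) ^ 2"
    by (simp add: norm_cos_squared sinh_def exp_minus field_simps)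
  ultimately have "(cos c * cosh (Im w)) ^ 2 \<le> norm (cos w) ^ 2"
    by (simp add: power_mult_distrib cosh_square_eq algebra_simps)
  then show ?thesis
    by (rule power2_le_imp_le) simp
qed

lemma exp_abs_le_two_cosh: "exp \<bar>x\<bar> \<le> 2 * cosh (x::real)"
  by (cases "x \<ge> 0") (auto simp: cosh_def)

lemma norm_two_mult_div_diff_squares_le:
  fixes w z :: complex
  assumes "\<bar>Re w\<bar> \<le> b" "b < Re z"
  shows "norm (2 * w / (z\<^sup>2 - w\<^sup>2)) \<le> 2 / (Re z - b)"
proof -
  have d: "Re z - b \<le> norm (z - w)" "Re z - b \<le> norm (z + w)"
    using assms complex_Re_le_cmod[of "z - w"] complex_Re_le_cmod[of "z + w"] by auto
  then have "z - w \<noteq> 0" "z + w \<noteq> 0"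
    using assms by auto
  then have "2 * w / (z\<^sup>2 - w\<^sup>2) = 1 / (z - w) - 1 / (z + w)"
    by (simp add: field_simps power2_eq_square)
  also have "norm \<dots> \<le> 1 / norm (z - w) + 1 / norm (z + w)"
    using norm_triangle_ineq4[of "1 / (z - w)" "1 / (z + w)"] by (simp add: norm_divide)
  also have "\<dots> \<le> 1 / (Re z - b) + 1 / (Re z - b)"
    using d assms by (intro add_mono divide_left_mono mult_pos_pos) auto
  finally show ?thesis
    by simp
qed

lemma contour_integral_odd_linepath:
  assumes "\<And>w. f (- w) = - f w"
  shows "contour_integral (linepath (- a) (- b)) f = contour_integral (linepath a b) f"
proof -
  have "linepath (- a) (- b) x = - linepath a b x" for x
    by (simp add: linepath_def algebra_simps)
  then show ?thesis
    unfolding contour_integral_integral by (simp add: assms algebra_simps)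
qed

lemma contour_integral_odd_rectangle:
  assumes holf: "f holomorphic_on S" and S: "open S" "convex S"
    and odd: "\<And>w. f (- w) = - f w"
    and corners: "Complex a (-T) \<in> S" "Complex a T \<in> S" "Complex (-a) T \<in> S" "Complex (-a) (-T) \<in> S"
  shows "contour_integral (linepath (Complex a (-T)) (Complex a T)) f
    = - contour_integral (linepath (Complex a T) (Complex (-a) T)) f"
proof -
  define A B where "A = Complex a (-T)" and "B = Complex a T"
  have "Complex (-a) T = - A" "Complex (-a) (-T) = - B"
    by (simp_all add: A_def B_def complex_eq_iff)
  then have pts: "A \<in> S" "B \<in> S" "- A \<in> S" "- B \<in> S"
    using corners by (simp_all add: A_def B_def)
  have int: "f contour_integrable_on linepath p q" if "p \<in> S" "q \<in> S" for p q
    using closed_segment_subset[OF that S(2)]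
    by (intro contour_integrable_holomorphic_simple[OF holf S(1)]) auto
  define g where "g = linepath A B +++ linepath B (- A) +++ linepath (- A) (- B) +++ linepath (- B) A"
  have "(f has_contour_integral
      (contour_integral (linepath A B) f + (contour_integral (linepath B (- A)) f
        + (contour_integral (linepath (- A) (- B)) f + contour_integral (linepath (- B) A) f)))) g"
    unfolding g_def using pts
    by (intro has_contour_integral_join has_contour_integral_integral int valid_path_join) auto
  moreover have "(f has_contour_integral 0) g"
  proof (rule Cauchy_theorem_convex_simple[OF holf S(2)])
    have "path_image g \<subseteq> closed_segment A B \<union> closed_segment B (- A)
        \<union> closed_segment (- A) (- B) \<union> closed_segment (- B) A"
      by (auto simp: g_def path_image_join)
    also have "\<dots> \<subseteq> S"
      using pts closed_segment_subset[OF _ _ S(2)] by (simp add: Un_least)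
    finally show "path_image g \<subseteq> S" .
  qed (auto simp: g_def)
  moreover have "contour_integral (linepath (- A) (- B)) f = contour_integral (linepath A B) f"
    "contour_integral (linepath (- B) A) f = contour_integral (linepath B (- A)) f"
    using contour_integral_odd_linepath[of f, OF odd, of A B]
      contour_integral_odd_linepath[of f, OF odd, of B "- A"] by simp_all
  ultimately have "2 * (contour_integral (linepath A B) f + contour_integral (linepath B (- A)) f) = 0"
    using has_contour_integral_unique by (simp add: algebra_simps)
  then have "contour_integral (linepath A B) f + contour_integral (linepath B (- A)) f = 0"
    by (metis mult_eq_0_iff zero_neq_numeral)
  then show ?thesis
    by (simp add: A_def B_def \<open>Complex (-a) T = - A\<close> eq_neg_iff_add_eq_0)
qed

lemma closed_segment_horizontal:
  assumes "x \<in> closed_segment (Complex a T) (Complex (-a) T)"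
  shows "Im x = T" "\<bar>Re x\<bar> \<le> \<bar>a\<bar>"
proof -
  define H where "H = {x. Im x \<le> T} \<inter> {x. Im x \<ge> T} \<inter> {x. Re x \<le> \<bar>a\<bar>} \<inter> {x. Re x \<ge> - \<bar>a\<bar>}"
  have "convex H"
    unfolding H_def by (intro convex_Int convex_halfspace_Im_le convex_halfspace_Im_ge
        convex_halfspace_Re_le convex_halfspace_Re_ge)
  moreover have "Complex a T \<in> H" "Complex (-a) T \<in> H"
    by (auto simp: H_def)
  ultimately have "x \<in> H"
    using closed_segment_subset assms by blast
  then show "Im x = T" "\<bar>Re x\<bar> \<le> \<bar>a\<bar>"
    by (auto simp: H_def)
qed

lemma exp_neg_abs_integrable:
  assumes "0 < c"
  shows "(\<lambda>t::real. exp (- c * \<bar>t\<bar>)) integrable_on UNIV"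
proof -
  have "(\<lambda>t. exp (- c * t)) absolutely_integrable_on {0..}"
    using integrable_on_exp_minus_to_infinity[OF assms]
    by (intro nonnegative_absolutely_integrable_1) auto
  then have "(\<lambda>t. exp (- c * (- t))) absolutely_integrable_on {..0}"
    using has_absolute_integral_reflect_real[of "{..0}" "{0..}" "\<lambda>t. exp (- c * t)"] by auto
  then have "(\<lambda>t. exp (- c * \<bar>t\<bar>)) integrable_on {..0}"
    by (rule integrable_eq[OF set_lebesgue_integral_eq_integral(1)]) auto
  moreover have "(\<lambda>t. exp (- c * \<bar>t\<bar>)) integrable_on {0..}"
    using integrable_on_exp_minus_to_infinity[OF assms] by (rule integrable_eq) auto
  ultimately show ?thesis
  proof (rule integrable_Un')
    have "{..0::real} \<inter> {0..} = {0}"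
      by auto
    then show "negligible ({..0::real} \<inter> {0..})"
      by simp
  qed auto
qed

lemma integrable_on_UNIV_dominated:
  fixes h :: "real \<Rightarrow> 'a::euclidean_space"
  assumes "continuous_on UNIV h" "G integrable_on UNIV" "\<And>t. norm (h t) \<le> G t"
  shows "h integrable_on UNIV" "(\<lambda>n. integral {-real n..real n} h) \<longlonglongrightarrow> integral UNIV h"
proof -
  define F where "F n t = (if t \<in> {-real n..real n} then h t else 0)" for n t
  have "F n integrable_on UNIV" for n
    unfolding F_def integrable_restrict_UNIV
    by (rule integrable_continuous_interval) (rule continuous_on_subset[OF assms(1)], auto)
  moreover have "norm (F n t) \<le> G t" for n t
    using assms(3)[of t] norm_ge_zero[of "h t"] by (auto simp: F_def simp del: norm_ge_zero)
  moreover have "(\<lambda>n. F n t) \<longlonglongrightarrow> h t" for t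
  proof (rule tendsto_eventually, rule eventually_sequentiallyI)
    fix n assume "nat \<lceil>\<bar>t\<bar>\<rceil> \<le> n"
    then show "F n t = h t"
      by (auto simp: F_def)
  qed
  ultimately have "h integrable_on UNIV" "(\<lambda>n. integral UNIV (F n)) \<longlonglongrightarrow> integral UNIV h"
    using dominated_convergence[OF _ assms(2), of F h] by blast+
  moreover have "integral UNIV (F n) = integral {-real n..real n} h" for n
    unfolding F_def by (rule integral_restrict_UNIV)
  ultimately show "h integrable_on UNIV" "(\<lambda>n. integral {-real n..real n} h) \<longlonglongrightarrow> integral UNIV h"
    by simp_all
qed

lemma integral_vertical_segment_eq_contour_integral:
  assumes "f contour_integrable_on linepath (Complex a (-T)) (Complex a T)" "0 < T"
  shows "integral {-T..T} (\<lambda>t. f (Complex a t) * \<i>)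
    = contour_integral (linepath (Complex a (-T)) (Complex a T)) f"
proof -
  let ?V = "contour_integral (linepath (Complex a (-T)) (Complex a T)) f"
  have "((\<lambda>t. f (Complex a t)) has_integral (- \<i> * ?V)) {-T..T}"
    using has_contour_integral_integral[OF assms(1)] assms(2)
      has_contour_integral_linepath_same_Re_iff[of "Complex a (-T)" a "Complex a T" "-T" T f ?V]
    by simp
  then have "((\<lambda>t. f (Complex a t) * \<i>) has_integral (- \<i> * ?V * \<i>)) {-T..T}"
    by (rule has_integral_mult_left)
  moreover have "- \<i> * ?V * \<i> = ?V"
    by (simp add: algebra_simps)
  ultimately show ?thesis
    by (metis integral_unique)
qed

lemma vertical_strip_eq: "{w. \<bar>Re w\<bar> < b} = {w. Re w < b} \<inter> {w. Re w > -b}"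
  by auto

lemma open_vertical_strip: "open {w. \<bar>Re w\<bar> < b}"
  unfolding vertical_strip_eq by (intro open_Int open_halfspace_Re_lt open_halfspace_Re_gt)

lemma convex_vertical_strip: "convex {w. \<bar>Re w\<bar> < b}"
  unfolding vertical_strip_eq by (intro convex_Int convex_halfspace_Re_lt convex_halfspace_Re_gt)

lemma norm_integral_vertical_segment_odd_le:
  fixes f :: "complex \<Rightarrow> complex"
  assumes holf: "f holomorphic_on {w. \<bar>Re w\<bar> < b}" and odd: "\<And>w. f (- w) = - f w"
    and "0 \<le> a" "a < b" "0 < T"
    and top: "\<And>x. \<bar>Re x\<bar> \<le> a \<Longrightarrow> Im x = T \<Longrightarrow> norm (f x) \<le> B"
  shows "norm (integral {-T..T} (\<lambda>t. f (Complex a t) * \<i>)) \<le> B * (2 * a)"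
proof -
  let ?S = "{w. \<bar>Re w\<bar> < b}"
  let ?top = "linepath (Complex a T) (Complex (-a) T)"
  have in_S: "Complex x y \<in> ?S" if "\<bar>x\<bar> \<le> a" for x y
    using that \<open>a < b\<close> by simp
  have int: "f contour_integrable_on linepath p q" if "p \<in> ?S" "q \<in> ?S" for p q
    using closed_segment_subset[OF that convex_vertical_strip]
    by (intro contour_integrable_holomorphic_simple[OF holf open_vertical_strip]) auto
  have "integral {-T..T} (\<lambda>t. f (Complex a t) * \<i>)
      = contour_integral (linepath (Complex a (-T)) (Complex a T)) f"
    using \<open>0 < T\<close> \<open>0 \<le> a\<close> by (intro integral_vertical_segment_eq_contour_integral int in_S) auto
  also have "\<dots> = - contour_integral ?top f"
    using \<open>0 \<le> a\<close>
    by (intro contour_integral_odd_rectangle[OF holf open_vertical_strip convex_vertical_strip odd] in_S)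
      auto
  finally have "norm (integral {-T..T} (\<lambda>t. f (Complex a t) * \<i>)) = norm (contour_integral ?top f)"
    by simp
  also have "\<dots> \<le> B * norm (Complex (-a) T - Complex a T)"
  proof (rule has_contour_integral_bound_linepath)
    show "(f has_contour_integral contour_integral ?top f) ?top"
      using \<open>0 \<le> a\<close> by (intro has_contour_integral_integral int in_S) auto
    have "norm (f (Complex a T)) \<le> B"
      using top \<open>0 \<le> a\<close> by simp
    then show "0 \<le> B"
      by (meson norm_ge_zero order_trans)
    show "norm (f x) \<le> B" if "x \<in> closed_segment (Complex a T) (Complex (-a) T)" for x
      using closed_segment_horizontal[OF that] top[of x] \<open>0 \<le> a\<close> by simp
  qed
  also have "Complex (-a) T - Complex a T = of_real (- 2 * a)"
    by (simp add: complex_eq_iff)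
  finally show ?thesis
    using \<open>0 \<le> a\<close> by simp
qed

lemma odd_holomorphic_vertical_line_integral_eq_0:
  fixes f :: "complex \<Rightarrow> complex"
  assumes holf: "f holomorphic_on {w. \<bar>Re w\<bar> < b}" and odd: "\<And>w. f (- w) = - f w"
    and "0 \<le> a" "a < b" "0 < c"
    and decay: "\<And>w. \<bar>Re w\<bar> \<le> a \<Longrightarrow> norm (f w) \<le> K * exp (- c * \<bar>Im w\<bar>)"
  shows "(\<lambda>t. f (Complex a t) * \<i>) integrable_on UNIV"
    and "integral UNIV (\<lambda>t. f (Complex a t) * \<i>) = 0"
proof -
  define h where "h t = f (Complex a t) * \<i>" for t
  have "continuous_on UNIV (\<lambda>t. Complex a t)"
    unfolding Complex_eq by (intro continuous_intros)
  then have "continuous_on UNIV (\<lambda>t. f (Complex a t))"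
    using \<open>0 \<le> a\<close> \<open>a < b\<close>
    by (intro continuous_on_compose2[OF holomorphic_on_imp_continuous_on[OF holf]]) auto
  then have "continuous_on UNIV h"
    unfolding h_def by (intro continuous_intros)
  moreover have "norm (h t) \<le> K * exp (- c * \<bar>t\<bar>)" for t
    using decay[of "Complex a t"] \<open>0 \<le> a\<close> by (simp add: h_def norm_mult)
  moreover have "(\<lambda>t. K * exp (- c * \<bar>t\<bar>)) integrable_on UNIV"
    using exp_neg_abs_integrable[OF \<open>0 < c\<close>] by (rule integrable_on_mult_right)
  ultimately have h_int: "h integrable_on UNIV"
    and h_lim: "(\<lambda>n. integral {-real n..real n} h) \<longlonglongrightarrow> integral UNIV h"
    using integrable_on_UNIV_dominated by blast+
  have "\<forall>\<^sub>F n in sequentially. norm (integral {-real n..real n} h) \<le> K * exp (- c * real n) * (2 * a)"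
  proof (rule eventually_sequentiallyI[of 1])
    fix n :: nat assume "1 \<le> n"
    have "norm (f x) \<le> K * exp (- c * real n)" if "\<bar>Re x\<bar> \<le> a" "Im x = real n" for x
      using decay[OF that(1)] that(2) by simp
    then show "norm (integral {-real n..real n} h) \<le> K * exp (- c * real n) * (2 * a)"
      unfolding h_def using \<open>1 \<le> n\<close> \<open>0 \<le> a\<close> \<open>a < b\<close>
      by (intro norm_integral_vertical_segment_odd_le[OF holf odd]) auto
  qed
  moreover have "(\<lambda>n. K * exp (- c * real n) * (2 * a)) \<longlonglongrightarrow> 0"
  proof -
    have "(\<lambda>n. exp (- c) ^ n) \<longlonglongrightarrow> 0"
      using \<open>0 < c\<close> by (intro LIMSEQ_power_zero) simp
    moreover have "exp (- c) ^ n = exp (- c * real n)" for n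
      by (simp add: exp_of_nat_mult[symmetric] mult.commute)
    ultimately have "(\<lambda>n. exp (- c * real n)) \<longlonglongrightarrow> 0"
      by simp
    then show ?thesis
      by (intro tendsto_mult_left_zero tendsto_mult_right_zero)
  qed
  ultimately have "(\<lambda>n. integral {-real n..real n} h) \<longlonglongrightarrow> 0"
    by (rule Lim_null_comparison)
  then show "h integrable_on UNIV" "integral UNIV h = 0"
    using h_int LIMSEQ_unique[OF h_lim] by simp_all
qed

lemma cos_pi_mult_nonzero:
  fixes w :: complex
  assumes "\<bar>Re w\<bar> < 1/2"
  shows "cos (of_real pi * w) \<noteq> 0"
proof -
  have "0 < cos (pi * \<bar>Re w\<bar>)"
    using assms by (intro cos_gt_zero_pi) (auto intro: order.strict_trans2[of _ 0])
  then have "0 < cos (pi * \<bar>Re w\<bar>) * cosh (Im (of_real pi * w))"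
    by simp
  also have "\<dots> \<le> norm (cos (of_real pi * w))"
    using assms by (intro norm_cos_ge_cos_mult_cosh) (auto simp: abs_mult)
  finally show ?thesis
    by auto
qed

definition I_kernel :: "complex \<Rightarrow> complex \<Rightarrow> complex" where
  "I_kernel z w = cos (of_real pi * z) / cos (of_real pi * w) * (2 * w / (z\<^sup>2 - w\<^sup>2))"

lemma I_integrand_eq_I_kernel: "I_integrand \<beta> z = (\<lambda>t. I_kernel z (Complex \<beta> t) * \<i>)"
  by (simp add: fun_eq_iff I_integrand_def I_kernel_def Let_def Complex_eq)

lemma I_kernel_odd: "I_kernel z (- w) = - I_kernel z w"
  by (simp add: I_kernel_def)

lemma I_kernel_holomorphic_on_strip:
  assumes "b \<le> 1/2" "b \<le> Re z"
  shows "I_kernel z holomorphic_on {w. \<bar>Re w\<bar> < b}"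
proof -
  have "z\<^sup>2 - w\<^sup>2 \<noteq> 0" if "\<bar>Re w\<bar> < b" for w
  proof -
    have "z - w \<noteq> 0" "z + w \<noteq> 0"
      using that assms by (auto simp: complex_eq_iff)
    then show ?thesis
      by (simp add: power2_eq_square square_diff_square_factored)
  qed
  moreover have "cos (of_real pi * w) \<noteq> 0" if "\<bar>Re w\<bar> < b" for w
    using that assms by (intro cos_pi_mult_nonzero) auto
  ultimately show ?thesis
    unfolding I_kernel_def by (intro holomorphic_intros) auto
qed

lemma norm_I_kernel_le:
  fixes w z :: complex
  assumes "b < 1/2" "b < Re z" "\<bar>Re w\<bar> \<le> b"
  shows "norm (I_kernel z w)
    \<le> 4 * norm (cos (of_real pi * z)) / (cos (pi * b) * (Re z - b)) * exp (- pi * \<bar>Im w\<bar>)"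
proof -
  define m where "m = cos (pi * b) * exp (pi * \<bar>Im w\<bar>) / 2"
  have "0 < cos (pi * b)"
    using assms by (intro cos_gt_zero_pi) (auto intro: order.strict_trans2[of _ 0])
  then have m_pos: "0 < m"
    by (simp add: m_def)
  have "m \<le> cos (pi * b) * cosh (Im (of_real pi * w))"
    using \<open>0 < cos (pi * b)\<close> exp_abs_le_two_cosh[of "pi * Im w"] by (simp add: m_def abs_mult)
  also have "\<dots> \<le> norm (cos (of_real pi * w))"
    using assms by (intro norm_cos_ge_cos_mult_cosh) (auto simp: abs_mult)
  finally have cos_w: "m \<le> norm (cos (of_real pi * w))" .
  have "norm (I_kernel z w)
      = norm (cos (of_real pi * z)) / norm (cos (of_real pi * w)) * norm (2 * w / (z\<^sup>2 - w\<^sup>2))"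
    by (simp add: I_kernel_def norm_mult norm_divide)
  also have "\<dots> \<le> norm (cos (of_real pi * z)) / m * (2 / (Re z - b))"
    using m_pos cos_w assms norm_two_mult_div_diff_squares_le[of w b z]
    by (intro mult_mono divide_left_mono mult_pos_pos) auto
  also have "\<dots> = 4 * norm (cos (of_real pi * z)) / (cos (pi * b) * (Re z - b)) * exp (- pi * \<bar>Im w\<bar>)"
    by (simp add: m_def exp_minus field_simps)
  finally show ?thesis .
qed

theorem corollary3p5:
  fixes \<beta> :: real and z :: complex
  assumes "0 < \<beta>" and "\<beta> < 1/2" and "Re z > \<beta>"
  shows "I_integrand \<beta> z integrable_on UNIV \<and> I_beta1 \<beta> z = 0"
proof -
  have holomorphic: "I_kernel z holomorphic_on {w. \<bar>Re w\<bar> < min (1/2) (Re z)}"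
    by (rule I_kernel_holomorphic_on_strip) auto
  have decay: "norm (I_kernel z w)
      \<le> 4 * norm (cos (of_real pi * z)) / (cos (pi * \<beta>) * (Re z - \<beta>)) * exp (- pi * \<bar>Im w\<bar>)"
    if "\<bar>Re w\<bar> \<le> \<beta>" for w
    using assms that by (intro norm_I_kernel_le) auto
  have "\<beta> < min (1/2) (Re z)"
    using assms by simp
  note vanishing = odd_holomorphic_vertical_line_integral_eq_0
    [OF holomorphic I_kernel_odd less_imp_le[OF \<open>0 < \<beta>\<close>] this pi_gt_zero decay]
  show ?thesis
    using vanishing by (simp add: I_beta1_def I_integrand_eq_I_kernel)
qed

end
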